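(* Let $k\subset K$ be a finite field extension such that Waring's problem holds in $k$. Then $k^+\subseteq\overline{N}_{K/k}$.
   Context: $N_{K/k}:K\to k$ is the field norm. $\overline{N}_{K/k}\subseteq k$ denotes the additive closure of the image of the norm, i.e. the set of all finite sums $\sum_i N_{K/k}(a_i)$ with $a_i\in K$ (including $0$). An element $a\in k$ is totally positive if $a>0$ in every ordering of $k$ (if $k$ has no orderings, every element is totally positive); $k^+$ denotes the set of totally positive elements of $k$ together with $0$. Waring's problem holds in $k$ if for every exponent $d\ge1$ there is a finite bound $g(k,d)$ such that every totally positive element of $k$ is a sum of at most $g(k,d)$ $d$-th powers of elements of $k$. *)

theory Defs
  imports Main "HOL-Combinatorics.Permutations"
begin

text \<open>The big field K is the type 'a; the base field k is a subfield k of it.\<close>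

definition subfield :: "'a::field set \<Rightarrow> bool" where
  "subfield k \<longleftrightarrow> 0 \<in> k \<and> 1 \<in> k \<and> (\<forall>x\<in>k. \<forall>y\<in>k. x + y \<in> k \<and> x * y \<in> k)
     \<and> (\<forall>x\<in>k. - x \<in> k) \<and> (\<forall>x\<in>k. x \<noteq> 0 \<longrightarrow> inverse x \<in> k)"

definition lin_indep_over :: "'a::field set \<Rightarrow> 'a list \<Rightarrow> bool" where
  "lin_indep_over k bs \<longleftrightarrow> (\<forall>c. (\<forall>i<length bs. c i \<in> k) \<and> (\<Sum>i<length bs. c i * bs ! i) = 0
      \<longrightarrow> (\<forall>i<length bs. c i = 0))"

definition spans_over :: "'a::field set \<Rightarrow> 'a list \<Rightarrow> bool" where
  "spans_over k bs \<longleftrightarrow> (\<forall>x. \<exists>c. (\<forall>i<length bs. c i \<in> k) \<and> x = (\<Sum>i<length bs. c i * bs ! i))"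

definition basis_over :: "'a::field set \<Rightarrow> 'a list \<Rightarrow> bool" where
  "basis_over k bs \<longleftrightarrow> lin_indep_over k bs \<and> spans_over k bs"

definition finite_extension :: "'a::field set \<Rightarrow> bool" where
  "finite_extension k \<longleftrightarrow> subfield k \<and> (\<exists>bs. basis_over k bs)"

definition coords :: "'a::field set \<Rightarrow> 'a list \<Rightarrow> 'a \<Rightarrow> nat \<Rightarrow> 'a" where
  "coords k bs x = (SOME c. (\<forall>i<length bs. c i \<in> k) \<and> x = (\<Sum>i<length bs. c i * bs ! i))"

text \<open>Field norm N_{K/k}(x): determinant (Leibniz formula) of the matrix of the k-linear
  map y \<mapsto> x*y with respect to a (chosen) k-basis of K.\<close>
definition field_norm :: "'a::field set \<Rightarrow> 'a \<Rightarrow> 'a" where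
  "field_norm k x = (let bs = (SOME bs. basis_over k bs); n = length bs;
       M = (\<lambda>i j. coords k bs (x * bs ! j) i)
     in \<Sum>p\<in>{p. p permutes {..<n}}. of_int (sign p) * (\<Prod>i<n. M i (p i)))"

definition norm_closure :: "'a::field set \<Rightarrow> 'a set" where
  "norm_closure k = {sum_list (map (field_norm k) xs) | xs. True}"

text \<open>An ordering of the field k, given by its positive cone P (the elements \<ge> 0).\<close>
definition field_ordering :: "'a::field set \<Rightarrow> 'a set \<Rightarrow> bool" where
  "field_ordering k P \<longleftrightarrow> P \<subseteq> k \<and> (\<forall>x\<in>P. \<forall>y\<in>P. x + y \<in> P \<and> x * y \<in> P)
     \<and> (\<forall>x\<in>k. x \<in> P \<or> - x \<in> P) \<and> (\<forall>x. x \<in> P \<and> - x \<in> P \<longrightarrow> x = 0)"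

definition totally_positive :: "'a::field set \<Rightarrow> 'a \<Rightarrow> bool" where
  "totally_positive k a \<longleftrightarrow> a \<in> k \<and> (\<forall>P. field_ordering k P \<longrightarrow> a \<in> P \<and> a \<noteq> 0)"

definition tot_pos_set :: "'a::field set \<Rightarrow> 'a set" where
  "tot_pos_set k = {a. totally_positive k a} \<union> {0}"

definition waring_holds :: "'a::field set \<Rightarrow> bool" where
  "waring_holds k \<longleftrightarrow> (\<forall>d::nat. d \<ge> 1 \<longrightarrow> (\<exists>g::nat. \<forall>a. totally_positive k a \<longrightarrow>
      (\<exists>xs. length xs \<le> g \<and> set xs \<subseteq> k \<and> a = sum_list (map (\<lambda>x. x ^ d) xs))))"

end

theory Submission
  imports Defs
begin

text \<open>Multiplication by an element x of k acts on K as the scalar x, so its matrix is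
  x times the identity and N(x) = x ^ [K:k]. With d = [K:k], Waring's problem writes every
  totally positive element of k as a sum of d-th powers of elements of k, i.e. of norms.\<close>

definition degree_over :: "'a::field set \<Rightarrow> nat" where
  "degree_over k = length (SOME bs. basis_over k bs)"

lemma finite_extension_basis:
  assumes "finite_extension k"
  shows "basis_over k (SOME bs. basis_over k bs)"
  using assms unfolding finite_extension_def by (metis someI_ex)

lemma basis_over_nonempty:
  assumes "basis_over k bs"
  shows "bs \<noteq> []"
proof
  assume "bs = []"
  then have "(1::'a) = 0"
    using assms unfolding basis_over_def spans_over_def by auto
  then show False by simp
qed

lemma coords_unique:
  assumes sf: "subfield k" and b: "basis_over k bs"
    and c: "\<forall>i<length bs. c i \<in> k" and x: "x = (\<Sum>i<length bs. c i * bs ! i)"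
    and i: "i < length bs"
  shows "coords k bs x i = c i"
proof -
  let ?P = "\<lambda>c. (\<forall>i<length bs. c i \<in> k) \<and> x = (\<Sum>i<length bs. c i * bs ! i)"
  have "?P (coords k bs x)"
    unfolding coords_def by (rule someI[of ?P c]) (use c x in auto)
  then have ck: "\<forall>i<length bs. coords k bs x i \<in> k"
    and cx: "x = (\<Sum>i<length bs. coords k bs x i * bs ! i)" by auto
  define d where "d = (\<lambda>i. coords k bs x i + - c i)"
  have dk: "\<forall>i<length bs. d i \<in> k"
    using c ck sf unfolding d_def subfield_def by (simp del: add_uminus_conv_diff)
  have "(\<Sum>i<length bs. d i * bs ! i)
      = (\<Sum>i<length bs. coords k bs x i * bs ! i) - (\<Sum>i<length bs. c i * bs ! i)"
    unfolding d_def by (simp add: algebra_simps sum_subtractf)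
  also have "\<dots> = 0" using x cx by simp
  finally have "\<forall>i<length bs. d i = 0"
    using b dk unfolding basis_over_def lin_indep_over_def by blast
  then show ?thesis using i unfolding d_def by (simp add: add_eq_0_iff2)
qed

lemma coords_scaled_basis:
  assumes sf: "subfield k" and b: "basis_over k bs" and xk: "x \<in> k"
    and i: "i < length bs" and j: "j < length bs"
  shows "coords k bs (x * bs ! j) i = (if i = j then x else 0)"
proof (rule coords_unique[OF sf b _ _ i])
  show "\<forall>i<length bs. (if i = j then x else 0) \<in> k"
    using xk sf unfolding subfield_def by auto
  show "x * bs ! j = (\<Sum>i<length bs. (if i = j then x else 0) * bs ! i)"
    using j by (simp add: if_distrib[of "\<lambda>c. c * _"] cong: if_cong)
qed

lemma leibniz_det_diagonal:
  fixes M :: "nat \<Rightarrow> nat \<Rightarrow> 'a::comm_ring_1"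
  assumes diag: "\<And>i j. i < n \<Longrightarrow> j < n \<Longrightarrow> i \<noteq> j \<Longrightarrow> M i j = 0"
  shows "(\<Sum>p\<in>{p. p permutes {..<n}}. of_int (sign p) * (\<Prod>i<n. M i (p i))) = (\<Prod>i<n. M i i)"
proof -
  let ?t = "\<lambda>p. of_int (sign p) * (\<Prod>i<n. M i (p i)) :: 'a"
  have vanish: "?t p = 0" if "p \<in> {p. p permutes {..<n}} - {id}" for p
  proof -
    from that have p: "p permutes {..<n}" and "p \<noteq> id" by auto
    then obtain i where pi: "p i \<noteq> i" by (metis eq_id_iff)
    then have i: "i < n" using p by (meson lessThan_iff permutes_not_in)
    then have "p i < n" using p by (meson lessThan_iff permutes_in_image)
    then have "M i (p i) = 0" using diag i pi by auto
    then have "(\<Prod>i<n. M i (p i)) = 0" using i by (meson finite_lessThan lessThan_iff prod_zero)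
    then show ?thesis by simp
  qed
  have "(\<Sum>p\<in>{p. p permutes {..<n}}. ?t p) = ?t id + (\<Sum>p\<in>{p. p permutes {..<n}} - {id}. ?t p)"
    by (rule sum.remove) (simp_all add: finite_permutations permutes_id)
  also have "\<dots> = ?t id" using vanish by simp
  finally show ?thesis by (simp add: sign_id)
qed

lemma field_norm_of_base:
  assumes fe: "finite_extension k" and xk: "x \<in> k"
  shows "field_norm k x = x ^ degree_over k"
proof -
  define bs where "bs = (SOME bs. basis_over k bs)"
  have sf: "subfield k" using fe unfolding finite_extension_def by simp
  have b: "basis_over k bs" unfolding bs_def using finite_extension_basis[OF fe] .
  have "field_norm k x = (\<Prod>i<length bs. coords k bs (x * bs ! i) i)"
    unfolding field_norm_def Let_def bs_def[symmetric]
    by (rule leibniz_det_diagonal) (simp add: coords_scaled_basis[OF sf b xk])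
  also have "\<dots> = (\<Prod>i<length bs. x)"
    by (simp add: coords_scaled_basis[OF sf b xk])
  finally show ?thesis by (simp add: degree_over_def bs_def)
qed

lemma sum_list_field_norm_in_norm_closure:
  "sum_list (map (field_norm k) xs) \<in> norm_closure k"
  unfolding norm_closure_def by blast

theorem mainTheorem6:
  fixes k :: "'a::field set"
  assumes "finite_extension k"
    and "waring_holds k"
  shows "tot_pos_set k \<subseteq> norm_closure k"
proof
  fix a assume a: "a \<in> tot_pos_set k"
  show "a \<in> norm_closure k"
  proof (cases "a = 0")
    case True
    then show ?thesis using sum_list_field_norm_in_norm_closure[of k "[]"] by simp
  next
    case False
    then have "totally_positive k a" using a unfolding tot_pos_set_def by simp
    moreover have "degree_over k \<ge> 1"
      using basis_over_nonempty[OF finite_extension_basis[OF assms(1)]]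
      unfolding degree_over_def by (simp add: Suc_le_eq)
    ultimately obtain xs where xs: "set xs \<subseteq> k"
      and a_sum: "a = sum_list (map (\<lambda>x. x ^ degree_over k) xs)"
      using assms(2) unfolding waring_holds_def by blast
    have "map (\<lambda>x. x ^ degree_over k) xs = map (field_norm k) xs"
      using xs field_norm_of_base[OF assms(1)] by (auto intro!: map_cong)
    then show ?thesis using a_sum sum_list_field_norm_in_norm_closure by metis
  qed
qed

end
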